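(* For all $n\ge 2$, $PT_n=\ker(\varphi_{PT})$ is isomorphic to $PL_n=\ker(\psi_P)$.
   Context: For $n\ge 2$, the twisted virtual braid group $TVB_n$ is the group with generators $\sigma_1,\dots,\sigma_{n-1}$, $\rho_1,\dots,\rho_{n-1}$, $\gamma_1,\dots,\gamma_n$ and defining relations: $\sigma_i\sigma_{i+1}\sigma_i=\sigma_{i+1}\sigma_i\sigma_{i+1}$ ($1\le i\le n-2$); $\sigma_i\sigma_j=\sigma_j\sigma_i$ ($|i-j|\ge 2$); $\rho_i^2=1$; $\rho_i\rho_j=\rho_j\rho_i$ ($|i-j|\ge2$); $\rho_i\rho_{i+1}\rho_i=\rho_{i+1}\rho_i\rho_{i+1}$ ($1\le i\le n-2$); $\sigma_i\rho_j=\rho_j\sigma_i$ ($|i-j|\ge 2$); $\rho_i\rho_{i+1}\sigma_i=\sigma_{i+1}\rho_i\rho_{i+1}$ ($1\le i\le n-2$); $\gamma_i^2=1$ and $\gamma_i\gamma_j=\gamma_j\gamma_i$ (all $i,j$); $\gamma_j\rho_i=\rho_i\gamma_j$ and $\gamma_j\sigma_i=\sigma_i\gamma_j$ for $j\notin\{i,i+1\}$; $\rho_i\gamma_i=\gamma_{i+1}\rho_i$ ($1\le i\le n-1$); $\rho_i\sigma_i\rho_i=\gamma_{i+1}\gamma_i\sigma_i\gamma_i\gamma_{i+1}$ ($1\le i\le n-1$). $TVP_n$ is the kernel of $\varphi_P:TVB_n\to S_n$, $\sigma_i,\rho_i\mapsto(i,i+1)$, $\gamma_j\mapsto e$. In $TVB_n$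 define $\lambda_{i,i+1}=\rho_i\sigma_i^{-1}$, $\lambda_{i+1,i}=\rho_i\lambda_{i,i+1}\rho_i$ ($1\le i\le n-1$), and for $1\le i<j-1\le n-1$: $\lambda_{ij}=\rho_{j-1}\cdots\rho_{i+1}\lambda_{i,i+1}\rho_{i+1}\cdots\rho_{j-1}$, $\lambda_{ji}=\rho_{j-1}\cdots\rho_{i+1}\lambda_{i+1,i}\rho_{i+1}\cdots\rho_{j-1}$. $A_n=\langle\gamma_1,\dots,\gamma_n\rangle$; $\psi_P:TVP_n\to A_n$ is the homomorphism with $\lambda_{kl}\mapsto e$, $\gamma_j\mapsto\gamma_j$; $PL_n=\ker\psi_P$. $TS_n=\langle\rho_1,\dots,\rho_{n-1},\gamma_1,\dots,\gamma_n\rangle\le TVB_n$, and $\varphi_{PT}:TVB_n\to TS_n$ is the homomorphism $\sigma_i\mapsto\rho_i$, $\rho_i\mapsto\rho_i$, $\gamma_j\mapsto\gamma_j$; $PT_n=\ker\varphi_{PT}$. *)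

theory Defs
  imports "HOL-Algebra.Algebra"
begin

datatype gen = Sg nat | Rg nat | Gg nat

type_synonym letter = "gen \<times> bool"   (* (generator, True = inverse) *)
type_synonym word = "letter list"

fun valid_gen :: "nat \<Rightarrow> gen \<Rightarrow> bool" where
  "valid_gen n (Sg i) = (1 \<le> i \<and> i \<le> n - 1)"
| "valid_gen n (Rg i) = (1 \<le> i \<and> i \<le> n - 1)"
| "valid_gen n (Gg j) = (1 \<le> j \<and> j \<le> n)"

definition valid_word :: "nat \<Rightarrow> word \<Rightarrow> bool" where
  "valid_word n w = (\<forall>x \<in> set w. valid_gen n (fst x))"

abbreviation s :: "nat \<Rightarrow> letter" where "s i \<equiv> (Sg i, False)"
abbreviation s' :: "nat \<Rightarrow> letter" where "s' i \<equiv> (Sg i, True)"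
abbreviation r :: "nat \<Rightarrow> letter" where "r i \<equiv> (Rg i, False)"
abbreviation g :: "nat \<Rightarrow> letter" where "g j \<equiv> (Gg j, False)"

definition rels :: "nat \<Rightarrow> (word \<times> word) set" where
  "rels n =
     {([s i, s (i+1), s i], [s (i+1), s i, s (i+1)]) | i. 1 \<le> i \<and> i \<le> n - 2}
   \<union> {([s i, s j], [s j, s i]) | i j. 1 \<le> i \<and> i \<le> n - 1 \<and> 1 \<le> j \<and> j \<le> n - 1 \<and> (i + 2 \<le> j \<or> j + 2 \<le> i)}
   \<union> {([r i, r i], []) | i. 1 \<le> i \<and> i \<le> n - 1}
   \<union> {([r i, r j], [r j, r i]) | i j. 1 \<le> i \<and> i \<le> n - 1 \<and> 1 \<le> j \<and> j \<le> n - 1 \<and> (i + 2 \<le> j \<or> j + 2 \<le> i)}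
   \<union> {([r i, r (i+1), r i], [r (i+1), r i, r (i+1)]) | i. 1 \<le> i \<and> i \<le> n - 2}
   \<union> {([s i, r j], [r j, s i]) | i j. 1 \<le> i \<and> i \<le> n - 1 \<and> 1 \<le> j \<and> j \<le> n - 1 \<and> (i + 2 \<le> j \<or> j + 2 \<le> i)}
   \<union> {([r i, r (i+1), s i], [s (i+1), r i, r (i+1)]) | i. 1 \<le> i \<and> i \<le> n - 2}
   \<union> {([g i, g i], []) | i. 1 \<le> i \<and> i \<le> n}
   \<union> {([g i, g j], [g j, g i]) | i j. 1 \<le> i \<and> i \<le> n \<and> 1 \<le> j \<and> j \<le> n}
   \<union> {([g j, r i], [r i, g j]) | i j. 1 \<le> i \<and> i \<le> n - 1 \<and> 1 \<le> j \<and> j \<le> n \<and> j \<noteq> i \<and> j \<noteq> i + 1}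
   \<union> {([g j, s i], [s i, g j]) | i j. 1 \<le> i \<and> i \<le> n - 1 \<and> 1 \<le> j \<and> j \<le> n \<and> j \<noteq> i \<and> j \<noteq> i + 1}
   \<union> {([r i, g i], [g (i+1), r i]) | i. 1 \<le> i \<and> i \<le> n - 1}
   \<union> {([r i, s i, r i], [g (i+1), g i, s i, g i, g (i+1)]) | i. 1 \<le> i \<and> i \<le> n - 1}"

inductive eqv :: "nat \<Rightarrow> word \<Rightarrow> word \<Rightarrow> bool" for n where
  refl: "valid_word n w \<Longrightarrow> eqv n w w"
| sym: "eqv n u v \<Longrightarrow> eqv n v u"
| trans: "eqv n u v \<Longrightarrow> eqv n v w \<Longrightarrow> eqv n u w"
| ctxt: "eqv n u v \<Longrightarrow> valid_word n a \<Longrightarrow> valid_word n b \<Longrightarrow> eqv n (a @ u @ b) (a @ v @ b)"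
| cancel: "valid_gen n x \<Longrightarrow> eqv n [(x, e), (x, \<not> e)] []"
| rel: "(l, q) \<in> rels n \<Longrightarrow> eqv n l q"

definition cls :: "nat \<Rightarrow> word \<Rightarrow> word set" where
  "cls n w = {v. eqv n v w}"

definition TVB :: "nat \<Rightarrow> word set monoid" where
  "TVB n = \<lparr> carrier = {cls n w | w. valid_word n w},
             monoid.mult = (\<lambda>A B. {w. \<exists>a \<in> A. \<exists>b \<in> B. eqv n w (a @ b)}),
             monoid.one = cls n [] \<rparr>"

definition gam :: "nat \<Rightarrow> nat \<Rightarrow> word set" where
  "gam n j = cls n [g j]"

text \<open>Words for lambda_{kl} (1-based indices, k \<noteq> l), following the definition literally.\<close>
definition lam_word :: "nat \<Rightarrow> nat \<Rightarrow> word" where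
  "lam_word k l =
    (if k < l then map r (rev [k+1..<l]) @ [r k, s' k] @ map r [k+1..<l]
     else map r (rev [l+1..<k]) @ [r l, r l, s' l, r l] @ map r [l+1..<k])"

definition lam :: "nat \<Rightarrow> nat \<Rightarrow> nat \<Rightarrow> word set" where
  "lam n k l = cls n (lam_word k l)"

fun perm_gen :: "gen \<Rightarrow> nat \<Rightarrow> nat" where
  "perm_gen (Sg i) = Transposition.transpose i (i+1)"
| "perm_gen (Rg i) = Transposition.transpose i (i+1)"
| "perm_gen (Gg j) = id"

text \<open>phi_P on words (transpositions are involutions, so inverses map the same way).\<close>
definition perm_word :: "word \<Rightarrow> nat \<Rightarrow> nat" where
  "perm_word w = foldr (\<lambda>x f. perm_gen (fst x) \<circ> f) w id"

definition TVP :: "nat \<Rightarrow> word set set" where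
  "TVP n = {c \<in> carrier (TVB n). \<exists>w \<in> c. perm_word w = id}"

fun subst_gen :: "gen \<Rightarrow> gen" where
  "subst_gen (Sg i) = Rg i"
| "subst_gen x = x"

definition phiPT_word :: "word \<Rightarrow> word" where
  "phiPT_word w = map (\<lambda>(x, e). (subst_gen x, e)) w"

definition PT :: "nat \<Rightarrow> word set set" where
  "PT n = {c \<in> carrier (TVB n). \<exists>w \<in> c. eqv n (phiPT_word w) []}"

definition A :: "nat \<Rightarrow> word set set" where
  "A n = generate (TVB n) {gam n j | j. 1 \<le> j \<and> j \<le> n}"

text \<open>The kernel of psi_P: the elements of TVP_n sent to the identity by the homomorphism
  psi_P : TVP_n \<rightarrow> A_n with lambda_{kl} \<mapsto> e, gamma_j \<mapsto> gamma_j (such a homomorphism is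
  determined on TVP_n by these conditions).\<close>
definition PL :: "nat \<Rightarrow> word set set" where
  "PL n = {x \<in> TVP n. \<forall>h.
      (h \<in> hom ((TVB n)\<lparr>carrier := TVP n\<rparr>) ((TVB n)\<lparr>carrier := A n\<rparr>)
       \<and> (\<forall>k l. 1 \<le> k \<and> k \<le> n \<and> 1 \<le> l \<and> l \<le> n \<and> k \<noteq> l \<longrightarrow> h (lam n k l) = one (TVB n))
       \<and> (\<forall>j. 1 \<le> j \<and> j \<le> n \<longrightarrow> h (gam n j) = gam n j))
      \<longrightarrow> h x = one (TVB n)}"

end

theory Submission
  imports Defs
begin

text \<open>
  In fact \<open>PT\<^sub>n = PL\<^sub>n\<close> (for every \<open>n\<close>), so the isomorphism is the identity.

  \<open>PL\<^sub>n \<subseteq> PT\<^sub>n\<close>: on \<open>TVP\<^sub>n\<close> the map \<open>\<phi>\<^sub>P\<^sub>T\<close> kills every \<open>\<lambda>\<^sub>k\<^sub>l\<close>, fixes every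
  \<open>\<gamma>\<^sub>j\<close>, and takes values in \<open>A\<^sub>n\<close>: a \<open>\<sigma>\<close>-free word is a \<open>\<gamma>\<close>-word times a
  \<open>\<rho>\<close>-word, and a \<open>\<rho>\<close>-word with trivial permutation is trivial because the \<open>\<rho>\<^sub>i\<close>
  satisfy the Coxeter relations of \<open>S\<^sub>n\<close>. So \<open>\<phi>\<^sub>P\<^sub>T\<close> is one of the homomorphisms
  in the definition of \<open>PL\<^sub>n\<close>.

  \<open>PT\<^sub>n \<subseteq> PL\<^sub>n\<close>: if \<open>\<phi>\<^sub>P\<^sub>T(w) = 1\<close> then \<open>w = w \<phi>\<^sub>P\<^sub>T(w)\<^sup>-\<^sup>1\<close>, which is a product of
  conjugates of \<open>\<sigma>\<^sub>i\<rho>\<^sub>i\<^sup>-\<^sup>1 = \<lambda>\<^sub>i\<^sub>,\<^sub>i\<^sub>+\<^sub>1\<^sup>-\<^sup>1\<close> and \<open>\<sigma>\<^sub>i\<^sup>-\<^sup>1\<rho>\<^sub>i\<close> by \<open>\<sigma>\<close>-free words.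
  Since \<open>\<rho>\<^sub>a \<lambda>\<^sub>k\<^sub>l \<rho>\<^sub>a = \<lambda>\<^bsub>s\<^sub>a(k) s\<^sub>a(l)\<^esub>\<close>, each factor is a conjugate of some
  \<open>\<lambda>\<^sub>k\<^sub>l\<^sup>\<plusminus>\<^sup>1\<close> by a \<open>\<gamma>\<close>-word, i.e. by an element of \<open>TVP\<^sub>n\<close>, and is therefore
  killed by every homomorphism \<open>TVP\<^sub>n \<rightarrow> A\<^sub>n\<close> killing all \<open>\<lambda>\<^sub>k\<^sub>l\<close>.
\<close>

section \<open>Words\<close>

lemma valid_word_simps [simp]:
  "valid_word n []"
  "valid_word n (x # w) \<longleftrightarrow> valid_gen n (fst x) \<and> valid_word n w"
  "valid_word n (u @ v) \<longleftrightarrow> valid_word n u \<and> valid_word n v"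
  by (auto simp: valid_word_def)

lemma valid_gen_Sg_Rg [simp]:
  "valid_gen n (Sg i) \<longleftrightarrow> 1 \<le> i \<and> i < n"
  "valid_gen n (Rg i) \<longleftrightarrow> 1 \<le> i \<and> i < n"
  by auto

lemma eqv_valid_word: "eqv n u v \<Longrightarrow> valid_word n u \<and> valid_word n v"
  by (induction rule: eqv.induct) (auto simp: rels_def)

lemma eqv_append: "eqv n u u' \<Longrightarrow> eqv n v v' \<Longrightarrow> eqv n (u @ v) (u' @ v')"
  using eqv.ctxt[of n u u' "[]" v] eqv.ctxt[of n v v' u' "[]"]
  by (auto dest: eqv_valid_word intro: eqv.trans)

lemma eqv_append_left: "eqv n u u' \<Longrightarrow> valid_word n a \<Longrightarrow> eqv n (a @ u) (a @ u')"
  by (rule eqv_append[OF eqv.refl])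

lemma eqv_append_right: "eqv n u u' \<Longrightarrow> valid_word n b \<Longrightarrow> eqv n (u @ b) (u' @ b)"
  by (rule eqv_append[OF _ eqv.refl])

lemma eqv_rewrite:
  assumes "eqv n l q" and "x = a @ l @ b" and "valid_word n x"
  shows "eqv n x (a @ q @ b)"
  using assms eqv.ctxt by simp

lemma eqv_rewrite_sym:
  assumes "eqv n l q" and "x = a @ q @ b" and "valid_word n x"
  shows "eqv n x (a @ l @ b)"
  using assms eqv.ctxt eqv.sym by (simp add: eqv_valid_word)

lemma eqv_reflI: "x = y \<Longrightarrow> valid_word n x \<Longrightarrow> eqv n x y"
  by (simp add: eqv.refl)

declare eqv.trans [trans]

definition inv_word :: "word \<Rightarrow> word" where
  "inv_word w = rev (map (\<lambda>(x, e). (x, \<not> e)) w)"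

lemma inv_word_simps [simp]:
  "inv_word [] = []"
  "inv_word (x # w) = inv_word w @ [(fst x, \<not> snd x)]"
  "inv_word (u @ v) = inv_word v @ inv_word u"
  "inv_word (inv_word w) = w"
  "valid_word n (inv_word w) \<longleftrightarrow> valid_word n w"
  by (auto simp: inv_word_def valid_word_def case_prod_beta rev_map[symmetric] comp_def)

lemma eqv_append_inv_word: "valid_word n w \<Longrightarrow> eqv n (w @ inv_word w) []"
proof (induction w)
  case Nil
  then show ?case by (simp add: eqv.refl)
next
  case (Cons x w)
  have "eqv n (x # w @ inv_word (x # w)) ([x] @ [] @ [(fst x, \<not> snd x)])"
    using Cons by (intro eqv_rewrite[OF Cons.IH]) auto
  also have "eqv n \<dots> []"
    using Cons.prems eqv.cancel[of n "fst x" "snd x"] by simp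
  finally show ?case by simp
qed

lemma eqv_inv_word_append: "valid_word n w \<Longrightarrow> eqv n (inv_word w @ w) []"
  using eqv_append_inv_word[of n "inv_word w"] by simp

lemma eqv_inv_word: "eqv n u v \<Longrightarrow> eqv n (inv_word u) (inv_word v)"
proof -
  assume uv: "eqv n u v"
  then have u: "valid_word n u" and v: "valid_word n v" by (simp_all add: eqv_valid_word)
  have "eqv n (inv_word u) (inv_word u @ (v @ inv_word v))"
    using eqv_append_left[OF eqv.sym[OF eqv_append_inv_word[OF v]], of "inv_word u"] u by simp
  also have "eqv n \<dots> ((inv_word u @ u) @ inv_word v)"
    using eqv_append_right[OF eqv_append_left[OF eqv.sym[OF uv]], of "inv_word u" "inv_word v"] u v
    by simp
  also have "eqv n \<dots> ([] @ inv_word v)"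
    using u v by (intro eqv_append_right eqv_inv_word_append) auto
  finally show ?thesis by simp
qed

lemma mem_cls_iff: "v \<in> cls n w \<longleftrightarrow> eqv n v w"
  by (simp add: cls_def)

lemma cls_self: "valid_word n w \<Longrightarrow> w \<in> cls n w"
  by (simp add: mem_cls_iff eqv.refl)

lemma cls_eq_iff: "valid_word n u \<Longrightarrow> cls n u = cls n v \<longleftrightarrow> eqv n u v"
  unfolding cls_def by (blast intro: eqv.refl eqv.sym eqv.trans)

lemma cls_eqI: "eqv n u v \<Longrightarrow> cls n u = cls n v"
  by (simp add: cls_eq_iff eqv_valid_word)

lemma carrier_TVB_iff: "x \<in> carrier (TVB n) \<longleftrightarrow> (\<exists>w. valid_word n w \<and> x = cls n w)"
  by (auto simp: TVB_def)

lemma cls_in_carrier_TVB [simp]: "valid_word n w \<Longrightarrow> cls n w \<in> carrier (TVB n)"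
  by (auto simp: carrier_TVB_iff)

lemma carrier_TVB_memD: "x \<in> carrier (TVB n) \<Longrightarrow> w \<in> x \<Longrightarrow> valid_word n w \<and> x = cls n w"
proof -
  assume "x \<in> carrier (TVB n)" "w \<in> x"
  then obtain v where "valid_word n v" "x = cls n v" "eqv n w v"
    by (auto simp: carrier_TVB_iff mem_cls_iff)
  then show ?thesis by (metis cls_eq_iff eqv_valid_word)
qed

lemma one_TVB: "\<one>\<^bsub>TVB n\<^esub> = cls n []"
  by (simp add: TVB_def)

lemma mult_cls:
  "valid_word n u \<Longrightarrow> valid_word n v \<Longrightarrow> cls n u \<otimes>\<^bsub>TVB n\<^esub> cls n v = cls n (u @ v)"
  unfolding TVB_def cls_def by (auto intro: eqv_append eqv.refl eqv.trans)

lemma group_TVB: "group (TVB n)"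
proof (rule groupI)
  fix x assume "x \<in> carrier (TVB n)"
  then obtain w where w: "valid_word n w" "x = cls n w" by (auto simp: carrier_TVB_iff)
  then have "cls n (inv_word w) \<otimes>\<^bsub>TVB n\<^esub> x = \<one>\<^bsub>TVB n\<^esub>"
    by (simp add: mult_cls one_TVB cls_eq_iff eqv_inv_word_append)
  then show "\<exists>y\<in>carrier (TVB n). y \<otimes>\<^bsub>TVB n\<^esub> x = \<one>\<^bsub>TVB n\<^esub>"
    using w by force
next
  fix x y assume "x \<in> carrier (TVB n)" "y \<in> carrier (TVB n)"
  then show "x \<otimes>\<^bsub>TVB n\<^esub> y \<in> carrier (TVB n)"
    by (auto simp: carrier_TVB_iff mult_cls) (metis valid_word_simps(3))
qed (auto simp: carrier_TVB_iff mult_cls one_TVB intro: exI[of _ "[]"])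

interpretation TVB: group "TVB n" for n
  by (rule group_TVB)

lemma inv_cls: "valid_word n w \<Longrightarrow> inv\<^bsub>TVB n\<^esub> (cls n w) = cls n (inv_word w)"
  by (intro TVB.inv_equality)
     (simp_all add: mult_cls one_TVB cls_eq_iff eqv_inv_word_append)

section \<open>Consequences of the defining relations\<close>

lemma eqv_rho_rho: "1 \<le> i \<Longrightarrow> i < n \<Longrightarrow> eqv n [r i, r i] []"
  by (rule eqv.rel) (auto simp: rels_def)

lemma eqv_rho_comm:
  "1 \<le> i \<Longrightarrow> i < n \<Longrightarrow> 1 \<le> j \<Longrightarrow> j < n \<Longrightarrow> i + 2 \<le> j \<or> j + 2 \<le> i \<Longrightarrow>
    eqv n [r i, r j] [r j, r i]"
  by (rule eqv.rel) (auto simp: rels_def)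

lemma eqv_rho_braid: "1 \<le> i \<Longrightarrow> i + 1 < n \<Longrightarrow> eqv n [r i, r (i+1), r i] [r (i+1), r i, r (i+1)]"
  by (rule eqv.rel) (auto simp: rels_def)

lemma eqv_sigma_rho_comm:
  "1 \<le> i \<Longrightarrow> i < n \<Longrightarrow> 1 \<le> j \<Longrightarrow> j < n \<Longrightarrow> i + 2 \<le> j \<or> j + 2 \<le> i \<Longrightarrow>
    eqv n [s i, r j] [r j, s i]"
  by (rule eqv.rel) (auto simp: rels_def)

lemma eqv_rho_rho_sigma: "1 \<le> i \<Longrightarrow> i + 1 < n \<Longrightarrow> eqv n [r i, r (i+1), s i] [s (i+1), r i, r (i+1)]"
  by (rule eqv.rel) (auto simp: rels_def)

lemma eqv_gamma_gamma: "1 \<le> i \<Longrightarrow> i \<le> n \<Longrightarrow> eqv n [g i, g i] []"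
  by (rule eqv.rel) (auto simp: rels_def)

lemma eqv_gamma_comm: "1 \<le> i \<Longrightarrow> i \<le> n \<Longrightarrow> 1 \<le> j \<Longrightarrow> j \<le> n \<Longrightarrow> eqv n [g i, g j] [g j, g i]"
  by (rule eqv.rel) (auto simp: rels_def)

lemma eqv_gamma_rho_comm:
  "1 \<le> i \<Longrightarrow> i < n \<Longrightarrow> 1 \<le> j \<Longrightarrow> j \<le> n \<Longrightarrow> j \<noteq> i \<Longrightarrow> j \<noteq> i + 1 \<Longrightarrow>
    eqv n [g j, r i] [r i, g j]"
  by (rule eqv.rel) (auto simp: rels_def)

lemma eqv_rho_gamma: "1 \<le> i \<Longrightarrow> i < n \<Longrightarrow> eqv n [r i, g i] [g (i+1), r i]"
  by (rule eqv.rel) (auto simp: rels_def)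

lemma eqv_cancel_inv: "valid_gen n x \<Longrightarrow> eqv n [(x, True), (x, False)] []"
  using eqv.cancel[of n x True] by simp

lemma eqv_cancel: "valid_gen n x \<Longrightarrow> eqv n [(x, False), (x, True)] []"
  using eqv.cancel[of n x False] by simp

lemma eqv_rho_inv: "1 \<le> i \<Longrightarrow> i < n \<Longrightarrow> eqv n [(Rg i, True)] [r i]"
proof -
  assume i: "1 \<le> i" "i < n"
  have "eqv n [(Rg i, True)] ([(Rg i, True)] @ [r i, r i] @ [])"
    using i by (intro eqv_rewrite_sym[OF eqv_rho_rho]) auto
  also have "eqv n \<dots> ([] @ [] @ [r i])"
    using i by (intro eqv_rewrite[OF eqv_cancel_inv]) auto
  finally show ?thesis by simp
qed

lemma eqv_gamma_inv: "1 \<le> i \<Longrightarrow> i \<le> n \<Longrightarrow> eqv n [(Gg i, True)] [g i]"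
proof -
  assume i: "1 \<le> i" "i \<le> n"
  have "eqv n [(Gg i, True)] ([(Gg i, True)] @ [g i, g i] @ [])"
    using i by (intro eqv_rewrite_sym[OF eqv_gamma_gamma]) auto
  also have "eqv n \<dots> ([] @ [] @ [g i])"
    using i by (intro eqv_rewrite[OF eqv_cancel_inv]) auto
  finally show ?thesis by simp
qed

lemma eqv_rho_gamma_Suc: "1 \<le> i \<Longrightarrow> i < n \<Longrightarrow> eqv n [r i, g (i+1)] [g i, r i]"
proof -
  assume i: "1 \<le> i" "i < n"
  have "eqv n [r i, g (i+1)] ([r i, g (i+1)] @ [r i, r i] @ [])"
    using i by (intro eqv_rewrite_sym[OF eqv_rho_rho]) auto
  also have "eqv n \<dots> ([r i] @ [r i, g i] @ [r i])"
    using i by (intro eqv_rewrite_sym[OF eqv_rho_gamma]) auto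
  also have "eqv n \<dots> ([] @ [] @ [g i, r i])"
    using i by (intro eqv_rewrite[OF eqv_rho_rho]) auto
  finally show ?thesis by simp
qed

lemma eqv_rho_gamma_transpose:
  "1 \<le> i \<Longrightarrow> i < n \<Longrightarrow> 1 \<le> j \<Longrightarrow> j \<le> n \<Longrightarrow>
    eqv n [r i, g j] [g (Transposition.transpose i (i+1) j), r i]"
  using eqv_rho_gamma[of i n] eqv_rho_gamma_Suc[of i n] eqv_gamma_rho_comm[of i n j]
  by (cases "j = i \<or> j = i + 1") (auto intro: eqv.sym)

section \<open>The permutation of a word and \<open>\<phi>\<^sub>P\<^sub>T\<close> on words\<close>

lemma perm_word_simps [simp]:
  "perm_word [] = id"
  "perm_word (x # w) = perm_gen (fst x) \<circ> perm_word w"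
  by (simp_all add: perm_word_def)

lemma perm_word_append [simp]: "perm_word (u @ v) = perm_word u \<circ> perm_word v"
  by (induction u) (simp_all add: comp_assoc)

lemma perm_gen_perm_gen [simp]: "perm_gen x (perm_gen x k) = k"
  by (cases x) (auto simp: transpose_def)

lemma perm_word_inv_word [simp]:
  "perm_word (inv_word w) (perm_word w k) = k"
  "perm_word w (perm_word (inv_word w) k) = k"
  by (induction w arbitrary: k) auto

lemma perm_word_inj: "perm_word w x = perm_word w y \<Longrightarrow> x = y"
  by (metis perm_word_inv_word(1))

lemma perm_word_inv_word_id: "perm_word w = id \<Longrightarrow> perm_word (inv_word w) = id"
  by (metis comp_apply id_apply perm_word_inv_word(2) ext)

lemma perm_word_conj_id: "perm_word v = id \<Longrightarrow> perm_word (u @ v @ inv_word u) = id"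
  by (auto simp: fun_eq_iff)

lemma perm_word_eqv: "eqv n u v \<Longrightarrow> perm_word u = perm_word v"
  by (induction rule: eqv.induct) (auto simp: fun_eq_iff rels_def transpose_def)

lemma perm_word_map_gamma [simp]: "perm_word (map g js) = id"
  by (induction js) auto

lemma phiPT_word_simps [simp]:
  "phiPT_word [] = []"
  "phiPT_word (x # w) = (subst_gen (fst x), snd x) # phiPT_word w"
  "phiPT_word (u @ v) = phiPT_word u @ phiPT_word v"
  by (simp_all add: phiPT_word_def case_prod_beta)

lemma subst_gen_simps [simp]:
  "perm_gen (subst_gen x) = perm_gen x"
  "valid_gen n (subst_gen x) \<longleftrightarrow> valid_gen n x"
  by (cases x; simp)+

lemma perm_word_phiPT_word [simp]: "perm_word (phiPT_word w) = perm_word w"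
  by (induction w) auto

lemma inv_word_phiPT_word [simp]: "inv_word (phiPT_word w) = phiPT_word (inv_word w)"
  by (induction w) auto

lemma valid_word_phiPT_word [simp]: "valid_word n (phiPT_word w) \<longleftrightarrow> valid_word n w"
  by (induction w) auto

text \<open>The image under \<open>\<phi>\<^sub>P\<^sub>T\<close> of the relation
  \<open>\<rho>\<^sub>i\<sigma>\<^sub>i\<rho>\<^sub>i = \<gamma>\<^sub>i\<^sub>+\<^sub>1\<gamma>\<^sub>i\<sigma>\<^sub>i\<gamma>\<^sub>i\<gamma>\<^sub>i\<^sub>+\<^sub>1\<close>.\<close>
lemma eqv_rho_twist:
  "1 \<le> i \<Longrightarrow> i < n \<Longrightarrow> eqv n [r i, r i, r i] [g (i+1), g i, r i, g i, g (i+1)]"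
proof -
  assume i: "1 \<le> i" "i < n"
  have "eqv n [g (i+1), g i, r i, g i, g (i+1)] ([g (i+1), g i] @ [g (i+1), r i] @ [g (i+1)])"
    using i by (intro eqv_rewrite[OF eqv_rho_gamma]) auto
  also have "eqv n \<dots> ([g (i+1)] @ [g (i+1), g i] @ [r i, g (i+1)])"
    using i by (intro eqv_rewrite[OF eqv_gamma_comm]) auto
  also have "eqv n \<dots> ([g (i+1), g (i+1), g i] @ [g i, r i] @ [])"
    using i by (intro eqv_rewrite[OF eqv_rho_gamma_Suc]) auto
  also have "eqv n \<dots> ([] @ [] @ [g i, g i, r i])"
    using i by (intro eqv_rewrite[OF eqv_gamma_gamma[of "i+1"]]) auto
  also have "eqv n \<dots> ([] @ [] @ [r i])"
    using i by (intro eqv_rewrite[OF eqv_gamma_gamma[of i]]) auto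
  also have "eqv n \<dots> ([] @ [r i, r i] @ [r i])"
    using i by (intro eqv_rewrite_sym[OF eqv_rho_rho]) auto
  finally have "eqv n [g (i+1), g i, r i, g i, g (i+1)] [r i, r i, r i]" by simp
  then show ?thesis by (rule eqv.sym)
qed

lemma eqv_phiPT_word_rels: "(l, q) \<in> rels n \<Longrightarrow> eqv n (phiPT_word l) (phiPT_word q)"
  unfolding rels_def
  by (elim UnE; clarsimp; (rule eqv_rho_braid[simplified] eqv_rho_comm eqv_rho_rho eqv_gamma_gamma
          eqv_gamma_comm eqv_gamma_rho_comm eqv_rho_gamma[simplified] eqv_rho_twist[simplified]
          eqv_reflI)?;
        simp?; arith?)

lemma eqv_phiPT_word: "eqv n u v \<Longrightarrow> eqv n (phiPT_word u) (phiPT_word v)"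
proof (induction rule: eqv.induct)
  case (rel l q)
  then show ?case by (rule eqv_phiPT_word_rels)
next
  case (cancel x e)
  then show ?case by (simp add: eqv.cancel)
next
  case (refl w)
  then show ?case by (simp add: eqv.refl)
next
  case (sym u v)
  then show ?case by (blast intro: eqv.sym)
next
  case (trans u v w)
  then show ?case by (blast intro: eqv.trans)
next
  case (ctxt u v a b)
  then show ?case by (simp add: eqv.ctxt)
qed

section \<open>\<open>\<sigma>\<close>-free words and the Coxeter relations\<close>

lemma valid_word_map_rho [simp]: "valid_word n (map r R) \<longleftrightarrow> set R \<subseteq> {1..<n}"
  by (induction R) auto

lemma valid_word_map_gamma [simp]: "valid_word n (map g js) \<longleftrightarrow> set js \<subseteq> {1..n}"
  by (induction js) auto

lemma phiPT_word_map_rho [simp]: "phiPT_word (map r R) = map r R"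
  by (induction R) auto

lemma perm_word_rho_word_range:
  "set R \<subseteq> {1..<n} \<Longrightarrow> j \<in> {1..n} \<Longrightarrow> perm_word (map r R) j \<in> {1..n}"
  by (induction R) (auto simp: transpose_def)

lemma perm_word_rho_word_fixed:
  "\<forall>i\<in>set R. k \<noteq> i \<and> k \<noteq> i + 1 \<Longrightarrow> perm_word (map r R) k = k"
  by (induction R) auto

lemma eqv_rho_word_gamma:
  "set R \<subseteq> {1..<n} \<Longrightarrow> j \<in> {1..n} \<Longrightarrow>
    eqv n (map r R @ [g j]) (g (perm_word (map r R) j) # map r R)"
proof (induction R)
  case Nil
  then show ?case by (simp add: eqv.refl)
next
  case (Cons a R)
  let ?j = "perm_word (map r R) j"
  have j: "?j \<in> {1..n}" using Cons.prems by (intro perm_word_rho_word_range) auto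
  have "eqv n (map r (a # R) @ [g j]) ([r a] @ (g ?j # map r R) @ [])"
    using Cons by (intro eqv_rewrite[OF Cons.IH]) auto
  also have "eqv n \<dots> ([] @ [g (Transposition.transpose a (a+1) ?j), r a] @ map r R)"
    using Cons.prems j by (intro eqv_rewrite[OF eqv_rho_gamma_transpose]) auto
  finally show ?case by simp
qed

lemma eqv_rho_word_comm:
  "set c \<subseteq> {1..<n} \<Longrightarrow> 1 \<le> a \<Longrightarrow> a < n \<Longrightarrow> \<forall>x\<in>set c. a + 2 \<le> x \<or> x + 2 \<le> a \<Longrightarrow>
    eqv n (map r c @ [r a]) (r a # map r c)"
proof (induction c)
  case Nil
  then show ?case by (simp add: eqv.refl)
next
  case (Cons x c)
  have "eqv n (map r (x # c) @ [r a]) ([r x] @ (r a # map r c) @ [])"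
    using Cons by (intro eqv_rewrite[OF Cons.IH]) auto
  also have "eqv n \<dots> ([] @ [r a, r x] @ map r c)"
    using Cons.prems by (intro eqv_rewrite[OF eqv_rho_comm]) auto
  finally show ?case by simp
qed

definition sigma_free :: "word \<Rightarrow> bool" where
  "sigma_free w \<longleftrightarrow> (\<forall>x\<in>set w. \<forall>i. fst x \<noteq> Sg i)"

lemma sigma_free_simps [simp]:
  "sigma_free []"
  "sigma_free (x # w) \<longleftrightarrow> (\<forall>i. fst x \<noteq> Sg i) \<and> sigma_free w"
  "sigma_free (u @ v) \<longleftrightarrow> sigma_free u \<and> sigma_free v"
  by (auto simp: sigma_free_def)

lemma sigma_free_phiPT_word [simp]: "sigma_free (phiPT_word w)"
proof (induction w)
  case (Cons x w)
  then show ?case by (cases "fst x") auto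
qed simp

text \<open>Using \<open>\<rho>\<^sub>i\<gamma>\<^sub>j = \<gamma>\<^bsub>s\<^sub>i(j)\<^esub>\<rho>\<^sub>i\<close>, every \<open>\<gamma>\<close> can be moved to the front of a
  \<open>\<sigma>\<close>-free word.\<close>
lemma sigma_free_eqv_gamma_rho:
  assumes "sigma_free w" and "valid_word n w"
  obtains js R where "set js \<subseteq> {1..n}" "set R \<subseteq> {1..<n}" "eqv n w (map g js @ map r R)"
  using assms
proof (induction w arbitrary: thesis rule: rev_induct)
  case Nil
  show ?case by (rule Nil.prems(1)[of "[]" "[]"]) (simp_all add: eqv.refl)
next
  case (snoc x w)
  then obtain js R where js: "set js \<subseteq> {1..n}" and R: "set R \<subseteq> {1..<n}"
    and w: "eqv n w (map g js @ map r R)"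
    by auto
  obtain y e where x: "x = (y, e)" by fastforce
  show ?case
  proof (cases y)
    case (Sg i)
    then show ?thesis using snoc.prems x by simp
  next
    case (Rg i)
    then have i: "1 \<le> i" "i < n" using snoc.prems x by auto
    have "eqv n [x] [r i]"
      using x Rg i by (cases e) (simp_all add: eqv_rho_inv eqv.refl)
    then have "eqv n (w @ [x]) (map g js @ map r (R @ [i]))"
      using eqv_append[OF w] by simp
    then show ?thesis using snoc.prems(1)[of js "R @ [i]"] js R i by auto
  next
    case (Gg j)
    then have j: "j \<in> {1..n}" using snoc.prems x by auto
    have "eqv n [x] [g j]"
      using x Gg j by (cases e) (simp_all add: eqv_gamma_inv eqv.refl)
    then have "eqv n (w @ [x]) (map g js @ (map r R @ [g j]))"
      using eqv_append[OF w] by simp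
    also have "eqv n \<dots> (map g js @ (g (perm_word (map r R) j) # map r R))"
      using js R j by (intro eqv_append_left eqv_rho_word_gamma) auto
    finally show ?thesis
      using snoc.prems(1)[of "js @ [perm_word (map r R) j]" R] js R j perm_word_rho_word_range
      by auto
  qed
qed

text \<open>Push \<open>\<rho>\<^sub>a\<close> left until it meets \<open>\<rho>\<^sub>a\<rho>\<^sub>a\<^sub>-\<^sub>1\<close>, braid, and move the resulting
  \<open>\<rho>\<^sub>a\<^sub>-\<^sub>1\<close> to the front.\<close>
lemma eqv_segment_rho_braid:
  assumes "m \<le> n" "1 \<le> j" "j < a" "a < m"
  shows "eqv n (map r (rev [j..<m]) @ [r a]) (r (a - 1) # map r (rev [j..<m]))"
proof -
  define A where "A = rev [a+1..<m]"
  define B where "B = rev [j..<a-1]"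
  have seg: "rev [j..<m] = A @ [a, a - 1] @ B"
  proof -
    have "[j..<m] = [j..<a-1] @ [a-1..<m]"
      using upt_add_eq_append[of j "a-1" "m-(a-1)"] assms by simp
    moreover have "[a-1..<m] = [a-1, a] @ [a+1..<m]"
      using assms by (simp add: upt_rec)
    ultimately show ?thesis by (simp add: A_def B_def)
  qed
  have A: "set A \<subseteq> {1..<n}" and B: "set B \<subseteq> {1..<n}"
    using assms by (auto simp: A_def B_def)
  have "eqv n (map r (rev [j..<m]) @ [r a]) ((map r A @ [r a, r (a-1)]) @ (r a # map r B) @ [])"
    unfolding seg using assms A B
    by (intro eqv_rewrite[OF eqv_rho_word_comm]) (auto simp: B_def)
  also have "eqv n \<dots> (map r A @ [r (a-1), r (a-1+1), r (a-1)] @ map r B)"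
    using assms A B by (intro eqv_rewrite_sym[OF eqv_rho_braid]) auto
  also have "eqv n \<dots> ([] @ (r (a-1) # map r A) @ map r [a, a-1] @ map r B)"
    using assms A B by (intro eqv_rewrite[OF eqv_rho_word_comm]) (auto simp: A_def)
  finally show ?thesis by (simp add: seg)
qed

lemma eqv_segment_rho:
  assumes "m \<le> n" "1 \<le> j" "j \<le> m" "1 \<le> a" "a < m"
  obtains u j' where "set u \<subseteq> {1..<m-1}" "1 \<le> j'" "j' \<le> m"
    "eqv n (map r (rev [j..<m]) @ [r a]) (map r u @ map r (rev [j'..<m]))"
proof -
  consider "a + 1 = j" | "a + 1 < j" | "a = j" | "j < a" by linarith
  then show ?thesis
  proof cases
    case 1
    then have "rev [a..<m] = rev [j..<m] @ [a]" using assms by (simp add: upt_rec)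
    then show ?thesis using that[of "[]" a] 1 assms by (simp add: eqv.refl)
  next
    case 2
    have "eqv n (map r (rev [j..<m]) @ [r a]) (r a # map r (rev [j..<m]))"
      using 2 assms by (intro eqv_rho_word_comm) auto
    then show ?thesis using that[of "[a]" j] 2 assms by auto
  next
    case 3
    then have "rev [j..<m] = rev [Suc j..<m] @ [j]" using assms by (simp add: upt_rec)
    then have "eqv n (map r (rev [j..<m]) @ [r a]) (map r (rev [Suc j..<m]) @ [] @ [])"
      using 3 assms by (intro eqv_rewrite[OF eqv_rho_rho]) auto
    then show ?thesis using that[of "[]" "Suc j"] 3 assms by auto
  next
    case 4
    then show ?thesis
      by (intro that[of "[a - 1]" j]) (use eqv_segment_rho_braid[of m n j a] assms in auto)
  qed
qed

lemma eqv_rho_word_segment_form: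
  assumes "m \<le> n" "1 \<le> m" "set R \<subseteq> {1..<m}"
  obtains v j where "set v \<subseteq> {1..<m-1}" "1 \<le> j" "j \<le> m"
    "eqv n (map r R) (map r v @ map r (rev [j..<m]))"
  using assms(3)
proof (induction R arbitrary: thesis rule: rev_induct)
  case Nil
  show ?case by (rule Nil.prems(1)[of "[]" m]) (use assms in \<open>auto intro: eqv.refl\<close>)
next
  case (snoc a R)
  then obtain v j where v: "set v \<subseteq> {1..<m-1}" and j: "1 \<le> j" "j \<le> m"
    and R: "eqv n (map r R) (map r v @ map r (rev [j..<m]))"
    by auto
  have a: "1 \<le> a" "a < m" using snoc.prems by auto
  obtain u j' where u: "set u \<subseteq> {1..<m-1}" and j': "1 \<le> j'" "j' \<le> m"
    and seg: "eqv n (map r (rev [j..<m]) @ [r a]) (map r u @ map r (rev [j'..<m]))"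
    using eqv_segment_rho[OF assms(1) j a] by blast
  have "eqv n (map r (R @ [a])) (map r v @ (map r (rev [j..<m]) @ [r a]))"
    using eqv_append_right[OF R, of "[r a]"] a assms by simp
  also have "eqv n \<dots> (map r (v @ u) @ map r (rev [j'..<m]))"
    using eqv_append_left[OF seg, of "map r v"] v assms(1) by fastforce
  finally show ?case using snoc.prems(1)[of "v @ u" j'] v u j' by auto
qed

text \<open>By induction
  on \<open>m\<close>: in the normal form the segment must be empty, because the prefix fixes \<open>m\<close>
  whereas a nonempty segment \<open>\<rho>\<^sub>m\<^sub>-\<^sub>1 \<cdots> \<rho>\<^sub>j\<close> moves it.\<close>
lemma eqv_rho_word_Nil:
  "m \<le> n \<Longrightarrow> set R \<subseteq> {1..<m} \<Longrightarrow> perm_word (map r R) = id \<Longrightarrow> eqv n (map r R) []"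
proof (induction m arbitrary: R)
  case 0
  then show ?case by (simp add: eqv.refl)
next
  case (Suc m)
  obtain v j where v: "set v \<subseteq> {1..<m}" and j: "1 \<le> j" "j \<le> Suc m"
    and R: "eqv n (map r R) (map r v @ map r (rev [j..<Suc m]))"
    using eqv_rho_word_segment_form[OF Suc.prems(1) _ Suc.prems(2)] by auto
  have v_fix: "perm_word (map r v) (Suc m) = Suc m"
    using v by (intro perm_word_rho_word_fixed) fastforce
  have "perm_word (map r R) = perm_word (map r v) \<circ> perm_word (map r (rev [j..<Suc m]))"
    using perm_word_eqv[OF R] by (simp only: map_append perm_word_append)
  then have id: "perm_word (map r v) \<circ> perm_word (map r (rev [j..<Suc m])) = id"
    using Suc.prems(3) by metis
  have "j = Suc m"
  proof (rule ccontr)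
    assume "j \<noteq> Suc m"
    then have "perm_word (map r (rev [j..<Suc m])) (Suc m) = m"
      using j perm_word_rho_word_fixed[of "rev [j..<m]" "Suc m"] by simp
    then have "perm_word (map r v) m = perm_word (map r v) (Suc m)"
      using id v_fix by (metis comp_apply id_apply)
    then show False using perm_word_inj by force
  qed
  then have "perm_word (map r v) = id" using id by simp
  then have "eqv n (map r v) []" using Suc.IH[OF _ v] Suc.prems(1) by simp
  then show ?case using R \<open>j = Suc m\<close> by (auto intro: eqv.trans)
qed

lemma sigma_free_perm_id_eqv_gamma_word:
  assumes "sigma_free w" "valid_word n w" "perm_word w = id"
  obtains js where "set js \<subseteq> {1..n}" "eqv n w (map g js)"
proof -
  obtain js R where js: "set js \<subseteq> {1..n}" and R: "set R \<subseteq> {1..<n}"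
    and w: "eqv n w (map g js @ map r R)"
    using sigma_free_eqv_gamma_rho[OF assms(1,2)] .
  have "perm_word (map r R) = id" using perm_word_eqv[OF w] assms(3) by simp
  then have "eqv n (map r R) []" using eqv_rho_word_Nil[of n n R] R by simp
  then have "eqv n w (map g js)"
    using w eqv_append_left[of n "map r R" "[]" "map g js"] js by (auto intro: eqv.trans)
  then show ?thesis using that js by blast
qed

section \<open>\<open>PL\<^sub>n \<subseteq> PT\<^sub>n\<close>\<close>

lemma cls_in_TVP_iff: "valid_word n w \<Longrightarrow> cls n w \<in> TVP n \<longleftrightarrow> perm_word w = id"
proof
  assume "cls n w \<in> TVP n"
  then obtain v where "eqv n v w" "perm_word v = id" by (auto simp: TVP_def mem_cls_iff)
  then show "perm_word w = id" by (simp add: perm_word_eqv)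
next
  assume "valid_word n w" "perm_word w = id"
  moreover have "w \<in> cls n w" using \<open>valid_word n w\<close> by (rule cls_self)
  ultimately show "cls n w \<in> TVP n" by (auto simp: TVP_def)
qed

lemma TVP_memE:
  assumes "x \<in> TVP n"
  obtains w where "valid_word n w" "x = cls n w" "perm_word w = id"
  using assms carrier_TVB_memD unfolding TVP_def by blast

lemma gamma_word_in_A: "set js \<subseteq> {1..n} \<Longrightarrow> cls n (map g js) \<in> A n"
proof (induction js)
  case Nil
  have "\<one>\<^bsub>TVB n\<^esub> \<in> A n" unfolding A_def by (rule generate.one)
  then show ?case by (simp add: one_TVB)
next
  case (Cons j js)
  have "gam n j \<in> A n" using Cons.prems unfolding A_def by (intro generate.incl) auto
  then have "gam n j \<otimes>\<^bsub>TVB n\<^esub> cls n (map g js) \<in> A n"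
    using Cons unfolding A_def by (intro generate.eng) auto
  then show ?case using Cons.prems by (simp add: gam_def mult_cls)
qed

lemma eqv_inv_word_rho_word: "set R \<subseteq> {1..<n} \<Longrightarrow> eqv n (inv_word (map r R)) (map r (rev R))"
proof (induction R)
  case Nil
  then show ?case by (simp add: eqv.refl)
next
  case (Cons a R)
  then show ?case using eqv_append[OF Cons.IH eqv_rho_inv[of a n]] by simp
qed

lemma eqv_rho_word_conj_Nil:
  assumes "set R \<subseteq> {1..<n}" "eqv n u []"
  shows "eqv n (map r (rev R) @ u @ map r R) []"
proof -
  have "eqv n (map r (rev R) @ u @ map r R) (inv_word (map r R) @ [] @ map r R)"
    using assms by (intro eqv_append eqv.sym[OF eqv_inv_word_rho_word] eqv_append_right) auto
  also have "eqv n \<dots> []" using assms by (simp add: eqv_inv_word_append)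
  finally show ?thesis .
qed

lemma valid_word_lam_word:
  "k \<in> {1..n} \<Longrightarrow> l \<in> {1..n} \<Longrightarrow> k \<noteq> l \<Longrightarrow> valid_word n (lam_word k l)"
  by (auto simp: lam_word_def valid_word_def)

lemma eqv_phiPT_lam_word:
  assumes "k \<in> {1..n}" "l \<in> {1..n}" "k \<noteq> l"
  shows "eqv n (phiPT_word (lam_word k l)) []"
proof (cases "k < l")
  case True
  have "eqv n [r k, (Rg k, True)] []" using assms True by (intro eqv_cancel) auto
  then show ?thesis
    using True assms eqv_rho_word_conj_Nil[of "[k+1..<l]" n "[r k, (Rg k, True)]"]
    by (auto simp: lam_word_def)
next
  case False
  have "eqv n ([r l, r l] @ [(Rg l, True), r l]) ([] @ [])"
    using assms False by (intro eqv_append eqv_rho_rho eqv_cancel_inv) auto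
  then show ?thesis
    using False assms eqv_rho_word_conj_Nil[of "[l+1..<k]" n "[r l, r l, (Rg l, True), r l]"]
    by (auto simp: lam_word_def)
qed

text \<open>Restricted to \<open>TVP\<^sub>n\<close>, \<open>\<phi>\<^sub>P\<^sub>T\<close> is one of the homomorphisms quantified over in the
  definition of \<open>PL\<^sub>n\<close>.\<close>
definition phiPT :: "nat \<Rightarrow> word set \<Rightarrow> word set" where
  "phiPT n x = cls n (phiPT_word (SOME w. w \<in> x))"

lemma phiPT_cls: "valid_word n w \<Longrightarrow> phiPT n (cls n w) = cls n (phiPT_word w)"
proof -
  assume w: "valid_word n w"
  then have "w \<in> cls n w" by (rule cls_self)
  then have "eqv n (SOME v. v \<in> cls n w) w" by (metis mem_cls_iff someI)
  then have "eqv n (phiPT_word (SOME v. v \<in> cls n w)) (phiPT_word w)" by (rule eqv_phiPT_word)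
  then show ?thesis unfolding phiPT_def by (metis cls_eq_iff eqv_valid_word)
qed

lemma phiPT_TVP_in_A: "x \<in> TVP n \<Longrightarrow> phiPT n x \<in> A n"
proof -
  assume "x \<in> TVP n"
  then obtain w where w: "valid_word n w" "x = cls n w" "perm_word w = id" by (rule TVP_memE)
  obtain js where js: "set js \<subseteq> {1..n}" "eqv n (phiPT_word w) (map g js)"
    using sigma_free_perm_id_eqv_gamma_word[of "phiPT_word w" n] w by auto
  then have "phiPT n x = cls n (map g js)" using w by (simp add: phiPT_cls cls_eq_iff)
  then show ?thesis using gamma_word_in_A js by simp
qed

lemma phiPT_hom: "phiPT n \<in> hom ((TVB n)\<lparr>carrier := TVP n\<rparr>) ((TVB n)\<lparr>carrier := A n\<rparr>)"
  using phiPT_TVP_in_A by (auto simp: hom_def mult_cls phiPT_cls elim!: TVP_memE)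

lemma PL_subset_PT: "PL n \<subseteq> PT n"
proof
  fix x assume x: "x \<in> PL n"
  then have "x \<in> TVP n" by (simp add: PL_def)
  then obtain w where w: "valid_word n w" "x = cls n w" by (rule TVP_memE)
  have "phiPT n (lam n k l) = \<one>\<^bsub>TVB n\<^esub>" if "k \<in> {1..n}" "l \<in> {1..n}" "k \<noteq> l" for k l
    using that unfolding lam_def
    by (simp add: phiPT_cls valid_word_lam_word one_TVB cls_eq_iff eqv_phiPT_lam_word)
  moreover have "phiPT n (gam n j) = gam n j" if "j \<in> {1..n}" for j
    using that unfolding gam_def by (simp add: phiPT_cls)
  ultimately have "phiPT n x = \<one>\<^bsub>TVB n\<^esub>" using x phiPT_hom unfolding PL_def by auto
  then have "eqv n (phiPT_word w) []" using w by (simp add: phiPT_cls one_TVB cls_eq_iff)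
  moreover have "w \<in> x" using w by (simp add: cls_self)
  ultimately show "x \<in> PT n" using \<open>x \<in> TVP n\<close> unfolding PT_def TVP_def by auto
qed

section \<open>Conjugating \<open>\<lambda>\<^sub>k\<^sub>l\<close> by \<open>\<rho>\<^sub>a\<close>\<close>

definition conj_rho :: "nat \<Rightarrow> word \<Rightarrow> word" where
  "conj_rho a u = r a # u @ [r a]"

lemma valid_word_conj_rho [simp]: "valid_word n (conj_rho a u) \<longleftrightarrow> 1 \<le> a \<and> a < n \<and> valid_word n u"
  by (auto simp: conj_rho_def)

lemma eqv_conj_rho_cong: "eqv n u v \<Longrightarrow> 1 \<le> a \<Longrightarrow> a < n \<Longrightarrow> eqv n (conj_rho a u) (conj_rho a v)"
  unfolding conj_rho_def using eqv.ctxt[of n u v "[r a]" "[r a]"] by simp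

lemma eqv_conj_rho_conj_rho:
  assumes "valid_word n u" "1 \<le> a" "a < n"
  shows "eqv n (conj_rho a (conj_rho a u)) u"
proof -
  have "eqv n (conj_rho a (conj_rho a u)) ([] @ [] @ (u @ [r a, r a]))"
    using assms by (intro eqv_rewrite[OF eqv_rho_rho]) (auto simp: conj_rho_def)
  also have "eqv n \<dots> (u @ [] @ [])"
    using assms by (intro eqv_rewrite[OF eqv_rho_rho]) auto
  finally show ?thesis by simp
qed

lemma eqv_conj_rho_braid:
  assumes "valid_word n u" "1 \<le> a" "a + 1 < n"
  shows "eqv n (conj_rho a (conj_rho (a+1) (conj_rho a u)))
    (conj_rho (a+1) (conj_rho a (conj_rho (a+1) u)))"
proof -
  have "eqv n (conj_rho a (conj_rho (a+1) (conj_rho a u)))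
      ([] @ [r (a+1), r a, r (a+1)] @ (u @ [r a, r (a+1), r a]))"
    using assms by (intro eqv_rewrite[OF eqv_rho_braid]) (auto simp: conj_rho_def)
  also have "eqv n \<dots> (([r (a+1), r a, r (a+1)] @ u) @ [r (a+1), r a, r (a+1)] @ [])"
    using assms by (intro eqv_rewrite[OF eqv_rho_braid]) auto
  finally show ?thesis by (simp add: conj_rho_def)
qed

lemma eqv_conj_rho_comm:
  assumes "valid_word n u" "1 \<le> a" "a < n" "1 \<le> b" "b < n" "a + 2 \<le> b \<or> b + 2 \<le> a"
  shows "eqv n (conj_rho a (conj_rho b u)) (conj_rho b (conj_rho a u))"
proof -
  have "eqv n (conj_rho a (conj_rho b u)) ([] @ [r b, r a] @ (u @ [r b, r a]))"
    using assms by (intro eqv_rewrite[OF eqv_rho_comm]) (auto simp: conj_rho_def)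
  also have "eqv n \<dots> (([r b, r a] @ u) @ [r a, r b] @ [])"
    using assms by (intro eqv_rewrite[OF eqv_rho_comm]) auto
  finally show ?thesis by (simp add: conj_rho_def)
qed

fun gen_index :: "gen \<Rightarrow> nat" where
  "gen_index (Sg i) = i" | "gen_index (Rg i) = i" | "gen_index (Gg j) = j"

definition far_from :: "nat \<Rightarrow> word \<Rightarrow> bool" where
  "far_from a u \<longleftrightarrow>
    (\<forall>y\<in>set u. (\<forall>j. fst y \<noteq> Gg j) \<and> (a + 2 \<le> gen_index (fst y) \<or> gen_index (fst y) + 2 \<le> a))"

lemma far_from_simps [simp]:
  "far_from a []"
  "far_from a (y # u) \<longleftrightarrow>
    (\<forall>j. fst y \<noteq> Gg j) \<and> (a + 2 \<le> gen_index (fst y) \<or> gen_index (fst y) + 2 \<le> a) \<and> far_from a u"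
  "far_from a (u @ v) \<longleftrightarrow> far_from a u \<and> far_from a v"
  by (auto simp: far_from_def)

lemma eqv_rho_letter_comm:
  assumes "1 \<le> a" "a < n" "valid_gen n (fst y)" "far_from a [y]"
  shows "eqv n [r a, y] [y, r a]"
proof -
  obtain x e where y: "y = (x, e)" by fastforce
  have comm: "eqv n [r a, (x, False)] [(x, False), r a]"
    using assms y eqv_rho_comm[of a n] eqv_sigma_rho_comm[of _ n a]
    by (cases x) (auto intro: eqv.sym)
  show ?thesis
  proof (cases e)
    case False
    then show ?thesis using comm y by simp
  next
    case True
    have "eqv n [r a, y] ([] @ [(x, True), (x, False)] @ [r a, y])"
      using assms y by (intro eqv_rewrite_sym[OF eqv_cancel_inv]) auto
    also have "eqv n \<dots> ([(x, True)] @ [r a, (x, False)] @ [y])"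
      using assms y by (intro eqv_rewrite_sym[OF comm]) auto
    also have "eqv n \<dots> ([y, r a] @ [] @ [])"
      using assms y True by (intro eqv_rewrite[OF eqv_cancel]) auto
    finally show ?thesis by simp
  qed
qed

lemma eqv_rho_far_word_comm:
  "valid_word n u \<Longrightarrow> far_from a u \<Longrightarrow> 1 \<le> a \<Longrightarrow> a < n \<Longrightarrow> eqv n (r a # u) (u @ [r a])"
proof (induction u)
  case Nil
  then show ?case by (simp add: eqv.refl)
next
  case (Cons y u)
  have "eqv n (r a # y # u) ([] @ [y, r a] @ u)"
    using Cons.prems by (intro eqv_rewrite[OF eqv_rho_letter_comm]) auto
  also have "eqv n \<dots> ([y] @ (u @ [r a]) @ [])"
    using Cons by (intro eqv_rewrite[OF Cons.IH]) auto
  finally show ?case by simp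
qed

lemma eqv_conj_rho_far:
  assumes "valid_word n u" "far_from a u" "1 \<le> a" "a < n"
  shows "eqv n (conj_rho a u) u"
proof -
  have "eqv n (conj_rho a u) ([] @ (u @ [r a]) @ [r a])"
    using assms by (intro eqv_rewrite[OF eqv_rho_far_word_comm]) (auto simp: conj_rho_def)
  also have "eqv n \<dots> (u @ [] @ [])"
    using assms by (intro eqv_rewrite[OF eqv_rho_rho]) auto
  finally show ?thesis by simp
qed

lemma lam_word_Suc: "lam_word k (Suc k) = [r k, s' k]"
  by (simp add: lam_word_def)

lemma lam_word_Suc_left: "lam_word (Suc l) l = conj_rho l [r l, s' l]"
  by (simp add: lam_word_def conj_rho_def)

lemma lam_word_less_rec: "Suc k < l \<Longrightarrow> lam_word k l = conj_rho (l - 1) (lam_word k (l - 1))"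
  by (cases l) (auto simp: lam_word_def conj_rho_def)

lemma lam_word_greater_rec: "Suc l < k \<Longrightarrow> lam_word k l = conj_rho (k - 1) (lam_word (k - 1) l)"
  by (cases k) (auto simp: lam_word_def conj_rho_def)

lemma far_from_lam_word: "k \<noteq> l \<Longrightarrow> a + 2 \<le> min k l \<or> max k l + 1 \<le> a \<Longrightarrow> far_from a (lam_word k l)"
  by (auto simp: lam_word_def far_from_def)

text \<open>This is where the relation \<open>\<rho>\<^sub>i\<rho>\<^sub>i\<^sub>+\<^sub>1\<sigma>\<^sub>i = \<sigma>\<^sub>i\<^sub>+\<^sub>1\<rho>\<^sub>i\<rho>\<^sub>i\<^sub>+\<^sub>1\<close> enters.\<close>
lemma eqv_conj_rho_lam_shift:
  assumes "1 \<le> i" "i + 1 < n"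
  shows "eqv n (conj_rho i (conj_rho (i+1) [r i, s' i])) [r (i+1), s' (i+1)]"
proof -
  have "eqv n [r i, r (i+1), s' i, r (i+1), r i]
      ([] @ [s' (i+1), s (i+1)] @ [r i, r (i+1), s' i, r (i+1), r i])"
    using assms by (intro eqv_rewrite_sym[OF eqv_cancel_inv]) auto
  also have "eqv n \<dots> ([s' (i+1)] @ [r i, r (i+1), s i] @ [s' i, r (i+1), r i])"
    using assms by (intro eqv_rewrite_sym[OF eqv_rho_rho_sigma]) auto
  also have "eqv n \<dots> ([s' (i+1), r i, r (i+1)] @ [] @ [r (i+1), r i])"
    using assms by (intro eqv_rewrite[OF eqv_cancel]) auto
  also have "eqv n \<dots> ([s' (i+1), r i] @ [] @ [r i])"
    using assms by (intro eqv_rewrite[OF eqv_rho_rho[of "i+1"]]) auto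
  also have "eqv n \<dots> ([s' (i+1)] @ [] @ [])"
    using assms by (intro eqv_rewrite[OF eqv_rho_rho]) auto
  finally have inner: "eqv n [r i, r (i+1), s' i, r (i+1), r i] [s' (i+1)]" by simp
  have "eqv n (conj_rho i (conj_rho (i+1) [r i, s' i]))
      ([] @ [r (i+1), r i, r (i+1)] @ [s' i, r (i+1), r i])"
    using assms by (intro eqv_rewrite[OF eqv_rho_braid]) (auto simp: conj_rho_def)
  also have "eqv n \<dots> ([r (i+1)] @ [s' (i+1)] @ [])"
    using assms by (intro eqv_rewrite[OF inner]) auto
  finally show ?thesis by simp
qed

abbreviation adj_swap :: "nat \<Rightarrow> nat \<Rightarrow> nat" where
  "adj_swap a \<equiv> Transposition.transpose a (a+1)"

lemma eqv_conj_rho_lam_word_Suc: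
  assumes "1 \<le> k" "Suc k \<le> n" "1 \<le> a" "a < n"
  shows "eqv n (conj_rho a (lam_word k (Suc k))) (lam_word (adj_swap a k) (adj_swap a (Suc k)))"
proof -
  have v: "valid_word n [r k, s' k]" using assms by auto
  consider "a = k" | "a = k + 1" | "a + 1 = k" | "a + 2 \<le> k \<or> k + 2 \<le> a" by linarith
  then show ?thesis
  proof cases
    case 1
    then show ?thesis using assms v by (intro eqv_reflI) (auto simp: lam_word_Suc lam_word_Suc_left)
  next
    case 2
    then show ?thesis using assms v lam_word_less_rec[of k "k+2"]
      by (intro eqv_reflI) (auto simp: lam_word_Suc)
  next
    case 3
    have "eqv n (conj_rho a (lam_word k (Suc k)))
        (conj_rho a (conj_rho a (conj_rho (a+1) [r a, s' a])))"
      using 3 assms eqv.sym[OF eqv_conj_rho_lam_shift[of a n]]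
      by (auto simp: lam_word_Suc intro: eqv_conj_rho_cong)
    also have "eqv n \<dots> (conj_rho (a+1) [r a, s' a])"
      using 3 assms by (intro eqv_conj_rho_conj_rho) auto
    also have "conj_rho (a+1) [r a, s' a] = lam_word (adj_swap a k) (adj_swap a (Suc k))"
      using lam_word_less_rec[of a "a+2"] by (simp add: lam_word_Suc transpose_def flip: 3)
    finally show ?thesis .
  next
    case 4
    then have "eqv n (conj_rho a (lam_word k (Suc k))) (lam_word k (Suc k))"
      using assms v by (intro eqv_conj_rho_far) (auto simp: lam_word_Suc)
    moreover have "adj_swap a k = k" "adj_swap a (Suc k) = Suc k"
      using 4 by (auto simp: transpose_def)
    ultimately show ?thesis by simp
  qed
qed

lemma eqv_conj_rho_lam_word_less_braid:
  assumes "1 \<le> k" "k \<le> a" "a + 2 \<le> n"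
  shows "eqv n (conj_rho a (lam_word k (a+2))) (lam_word (adj_swap a k) (a+2))"
proof (cases "k = a")
  case True
  have "lam_word k (a+2) = conj_rho (a+1) [r a, s' a]"
    using True lam_word_less_rec[of a "a+2"] by (simp add: lam_word_Suc)
  then show ?thesis
    using eqv_conj_rho_lam_shift[of a n] assms True by (simp add: lam_word_Suc transpose_def)
next
  case False
  define w where "w = lam_word k a"
  have w: "valid_word n w" "far_from (a+1) w"
    unfolding w_def using assms False by (intro valid_word_lam_word far_from_lam_word; auto)+
  have rec: "lam_word k (a+2) = conj_rho (a+1) (conj_rho a w)"
    using assms False lam_word_less_rec[of k "a+1"] lam_word_less_rec[of k "a+2"]
    by (simp add: w_def)
  have "eqv n (conj_rho a (lam_word k (a+2))) (conj_rho (a+1) (conj_rho a (conj_rho (a+1) w)))"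
    unfolding rec using w assms by (intro eqv_conj_rho_braid) auto
  also have "eqv n \<dots> (lam_word k (a+2))"
    unfolding rec using w assms by (intro eqv_conj_rho_cong eqv_conj_rho_far) auto
  finally show ?thesis using assms False by (simp add: transpose_def)
qed

lemma eqv_conj_rho_lam_word_less_top:
  assumes "Suc k < l" "1 \<le> k" "l \<le> n" "l - 1 \<le> a" "a < n"
  shows "eqv n (conj_rho a (lam_word k l)) (lam_word (adj_swap a k) (adj_swap a l))"
proof -
  have rec: "lam_word k l = conj_rho (l - 1) (lam_word k (l - 1))"
    using lam_word_less_rec[OF assms(1)] .
  consider "a = l - 1" | "a = l" | "l + 1 \<le> a" using assms by linarith
  then show ?thesis
  proof cases
    case 1
    have "adj_swap a k = k" "adj_swap a l = l - 1" using 1 assms by (auto simp: transpose_def)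
    moreover have "valid_word n (lam_word k (l - 1))"
      using assms by (intro valid_word_lam_word) auto
    ultimately show ?thesis using 1 rec eqv_conj_rho_conj_rho[of n "lam_word k (l - 1)"] assms
      by simp
  next
    case 2
    have "adj_swap a k = k" "adj_swap a l = l + 1" using 2 assms by (auto simp: transpose_def)
    then show ?thesis
      using 2 lam_word_less_rec[of k "l+1"] assms valid_word_lam_word[of k n l]
      by (auto intro!: eqv_reflI)
  next
    case 3
    have "adj_swap a k = k" "adj_swap a l = l" using 3 assms by (auto simp: transpose_def)
    moreover have "eqv n (conj_rho a (lam_word k l)) (lam_word k l)"
      using 3 assms by (intro eqv_conj_rho_far valid_word_lam_word far_from_lam_word) auto
    ultimately show ?thesis by simp
  qed
qed

lemma eqv_conj_rho_lam_word_less: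
  "k < l \<Longrightarrow> 1 \<le> k \<Longrightarrow> l \<le> n \<Longrightarrow> 1 \<le> a \<Longrightarrow> a < n \<Longrightarrow>
    eqv n (conj_rho a (lam_word k l)) (lam_word (adj_swap a k) (adj_swap a l))"
proof (induction l arbitrary: a)
  case 0
  then show ?case by simp
next
  case (Suc l)
  show ?case
  proof (cases "l = k")
    case True
    then show ?thesis using Suc.prems eqv_conj_rho_lam_word_Suc[of k n a] by simp
  next
    case False
    then have kl: "Suc k < Suc l" using Suc.prems by simp
    consider "l \<le> a" | "a + 1 = l" | "a + 2 \<le> l" by linarith
    then show ?thesis
    proof cases
      case 1
      then show ?thesis using eqv_conj_rho_lam_word_less_top[OF kl] Suc.prems by simp
    next
      case 2
      then show ?thesis
        using eqv_conj_rho_lam_word_less_braid[of k a n] Suc.prems kl by (simp add: transpose_def)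
    next
      case 3
      have swap: "adj_swap a l = l" "adj_swap a (Suc l) = Suc l"
        using 3 by (auto simp: transpose_def)
      have k': "Suc (adj_swap a k) < Suc l" "1 \<le> adj_swap a k"
        using 3 kl Suc.prems by (auto simp: transpose_def)
      have "eqv n (conj_rho a (lam_word k (Suc l))) (conj_rho l (conj_rho a (lam_word k l)))"
        using 3 kl Suc.prems lam_word_less_rec[OF kl]
        by (simp, intro eqv_conj_rho_comm valid_word_lam_word) auto
      also have "eqv n \<dots> (conj_rho l (lam_word (adj_swap a k) l))"
        using Suc.IH[of a] swap Suc.prems kl 3 by (intro eqv_conj_rho_cong) auto
      also have "\<dots> = lam_word (adj_swap a k) (adj_swap a (Suc l))"
        using lam_word_less_rec[OF k'(1)] swap by simp
      finally show ?thesis .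
    qed
  qed
qed

lemma eqv_conj_rho_lam_word_Suc_left:
  assumes "1 \<le> l" "Suc l \<le> n" "1 \<le> a" "a < n"
  shows "eqv n (conj_rho a (lam_word (Suc l) l)) (lam_word (adj_swap a (Suc l)) (adj_swap a l))"
proof -
  have v: "valid_word n [r l, s' l]" using assms by auto
  consider "a = l" | "a = l + 1" | "a + 1 = l" | "a + 2 \<le> l \<or> l + 2 \<le> a" by linarith
  then show ?thesis
  proof cases
    case 1
    then show ?thesis
      using assms eqv_conj_rho_conj_rho[OF v, of a] by (simp add: lam_word_Suc lam_word_Suc_left)
  next
    case 2
    then show ?thesis using assms v lam_word_greater_rec[of l "l+2"]
      by (intro eqv_reflI) (auto simp: lam_word_Suc_left)
  next
    case 3
    have v': "valid_word n [r a, s' a]" using 3 assms by auto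
    have "eqv n (conj_rho a (lam_word (Suc l) l))
        (conj_rho a (conj_rho (a+1) (conj_rho a (conj_rho (a+1) [r a, s' a]))))"
      using 3 assms eqv.sym[OF eqv_conj_rho_lam_shift[of a n]]
      by (auto simp: lam_word_Suc_left intro!: eqv_conj_rho_cong)
    also have "eqv n \<dots> (conj_rho (a+1) (conj_rho a (conj_rho (a+1) (conj_rho (a+1) [r a, s' a]))))"
      using 3 assms v' by (intro eqv_conj_rho_braid) auto
    also have "eqv n \<dots> (conj_rho (a+1) (conj_rho a [r a, s' a]))"
      using 3 assms v' by (intro eqv_conj_rho_cong eqv_conj_rho_conj_rho) auto
    also have "conj_rho (a+1) (conj_rho a [r a, s' a])
        = lam_word (adj_swap a (Suc l)) (adj_swap a l)"
      using lam_word_greater_rec[of a "a+2"] by (simp add: lam_word_Suc_left transpose_def flip: 3)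
    finally show ?thesis .
  next
    case 4
    then have "eqv n (conj_rho a (lam_word (Suc l) l)) (lam_word (Suc l) l)"
      using assms by (intro eqv_conj_rho_far valid_word_lam_word far_from_lam_word) auto
    moreover have "adj_swap a l = l" "adj_swap a (Suc l) = Suc l"
      using 4 by (auto simp: transpose_def)
    ultimately show ?thesis by simp
  qed
qed

lemma eqv_conj_rho_lam_word_greater_braid:
  assumes "1 \<le> l" "l \<le> a" "a + 2 \<le> n"
  shows "eqv n (conj_rho a (lam_word (a+2) l)) (lam_word (a+2) (adj_swap a l))"
proof (cases "l = a")
  case True
  have v: "valid_word n [r a, s' a]" using assms by auto
  have "lam_word (a+2) l = conj_rho (a+1) (conj_rho a [r a, s' a])"
    using True lam_word_greater_rec[of a "a+2"] by (simp add: lam_word_Suc_left)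
  then have "eqv n (conj_rho a (lam_word (a+2) l))
      (conj_rho (a+1) (conj_rho a (conj_rho (a+1) [r a, s' a])))"
    using eqv_conj_rho_braid[OF v, of a] assms by simp
  also have "eqv n \<dots> (conj_rho (a+1) [r (a+1), s' (a+1)])"
    using assms by (intro eqv_conj_rho_cong eqv_conj_rho_lam_shift) auto
  finally show ?thesis using True by (simp add: lam_word_Suc_left transpose_def)
next
  case False
  define w where "w = lam_word a l"
  have w: "valid_word n w" "far_from (a+1) w"
    unfolding w_def using assms False by (intro valid_word_lam_word far_from_lam_word; auto)+
  have rec: "lam_word (a+2) l = conj_rho (a+1) (conj_rho a w)"
    using assms False lam_word_greater_rec[of l "a+1"] lam_word_greater_rec[of l "a+2"]
    by (simp add: w_def)
  have "eqv n (conj_rho a (lam_word (a+2) l)) (conj_rho (a+1) (conj_rho a (conj_rho (a+1) w)))"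
    unfolding rec using w assms by (intro eqv_conj_rho_braid) auto
  also have "eqv n \<dots> (lam_word (a+2) l)"
    unfolding rec using w assms by (intro eqv_conj_rho_cong eqv_conj_rho_far) auto
  finally show ?thesis using assms False by (simp add: transpose_def)
qed

lemma eqv_conj_rho_lam_word_greater_top:
  assumes "Suc l < k" "1 \<le> l" "k \<le> n" "k - 1 \<le> a" "a < n"
  shows "eqv n (conj_rho a (lam_word k l)) (lam_word (adj_swap a k) (adj_swap a l))"
proof -
  have rec: "lam_word k l = conj_rho (k - 1) (lam_word (k - 1) l)"
    using lam_word_greater_rec[OF assms(1)] .
  consider "a = k - 1" | "a = k" | "k + 1 \<le> a" using assms by linarith
  then show ?thesis
  proof cases
    case 1
    have "adj_swap a l = l" "adj_swap a k = k - 1" using 1 assms by (auto simp: transpose_def)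
    moreover have "valid_word n (lam_word (k - 1) l)"
      using assms by (intro valid_word_lam_word) auto
    ultimately show ?thesis using 1 rec eqv_conj_rho_conj_rho[of n "lam_word (k - 1) l"] assms
      by simp
  next
    case 2
    have "adj_swap a l = l" "adj_swap a k = k + 1" using 2 assms by (auto simp: transpose_def)
    then show ?thesis
      using 2 lam_word_greater_rec[of l "k+1"] assms valid_word_lam_word[of k n l]
      by (auto intro!: eqv_reflI)
  next
    case 3
    have "adj_swap a l = l" "adj_swap a k = k" using 3 assms by (auto simp: transpose_def)
    moreover have "eqv n (conj_rho a (lam_word k l)) (lam_word k l)"
      using 3 assms by (intro eqv_conj_rho_far valid_word_lam_word far_from_lam_word) auto
    ultimately show ?thesis by simp
  qed
qed

lemma eqv_conj_rho_lam_word_greater: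
  "l < k \<Longrightarrow> 1 \<le> l \<Longrightarrow> k \<le> n \<Longrightarrow> 1 \<le> a \<Longrightarrow> a < n \<Longrightarrow>
    eqv n (conj_rho a (lam_word k l)) (lam_word (adj_swap a k) (adj_swap a l))"
proof (induction k arbitrary: a)
  case 0
  then show ?case by simp
next
  case (Suc k)
  show ?case
  proof (cases "k = l")
    case True
    then show ?thesis using Suc.prems eqv_conj_rho_lam_word_Suc_left[of l n a] by simp
  next
    case False
    then have lk: "Suc l < Suc k" using Suc.prems by simp
    consider "k \<le> a" | "a + 1 = k" | "a + 2 \<le> k" by linarith
    then show ?thesis
    proof cases
      case 1
      then show ?thesis using eqv_conj_rho_lam_word_greater_top[OF lk] Suc.prems by simp
    next
      case 2
      then show ?thesis
        using eqv_conj_rho_lam_word_greater_braid[of l a n] Suc.prems lk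
        by (simp add: transpose_def)
    next
      case 3
      have swap: "adj_swap a k = k" "adj_swap a (Suc k) = Suc k"
        using 3 by (auto simp: transpose_def)
      have l': "Suc (adj_swap a l) < Suc k" "1 \<le> adj_swap a l"
        using 3 lk Suc.prems by (auto simp: transpose_def)
      have "eqv n (conj_rho a (lam_word (Suc k) l)) (conj_rho k (conj_rho a (lam_word k l)))"
        using 3 lk Suc.prems lam_word_greater_rec[OF lk]
        by (simp, intro eqv_conj_rho_comm valid_word_lam_word) auto
      also have "eqv n \<dots> (conj_rho k (lam_word k (adj_swap a l)))"
        using Suc.IH[of a] swap Suc.prems lk 3 by (intro eqv_conj_rho_cong) auto
      also have "\<dots> = lam_word (adj_swap a (Suc k)) (adj_swap a l)"
        using lam_word_greater_rec[OF l'(1)] swap by simp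
      finally show ?thesis .
    qed
  qed
qed

lemma eqv_conj_rho_lam_word:
  "k \<in> {1..n} \<Longrightarrow> l \<in> {1..n} \<Longrightarrow> k \<noteq> l \<Longrightarrow> 1 \<le> a \<Longrightarrow> a < n \<Longrightarrow>
    eqv n (conj_rho a (lam_word k l)) (lam_word (adj_swap a k) (adj_swap a l))"
  using eqv_conj_rho_lam_word_less[of k l n a] eqv_conj_rho_lam_word_greater[of l k n a]
  by (cases "k < l") auto

lemma eqv_rho_word_conj_lam:
  assumes "set R \<subseteq> {1..<n}" "1 \<le> i" "i < n"
  shows "eqv n (map r R @ [r i, s' i] @ inv_word (map r R))
    (lam_word (perm_word (map r R) i) (perm_word (map r R) (i+1)))"
proof -
  have "eqv n (map r R @ [r i, s' i] @ map r (rev R))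
      (lam_word (perm_word (map r R) i) (perm_word (map r R) (i+1)))"
    using assms(1)
  proof (induction R)
    case Nil
    then show ?case using assms by (intro eqv_reflI) (auto simp: lam_word_Suc)
  next
    case (Cons a R)
    let ?k = "perm_word (map r R) i" and ?l = "perm_word (map r R) (i+1)"
    have kl: "?k \<in> {1..n}" "?l \<in> {1..n}" "?k \<noteq> ?l"
      using Cons.prems assms perm_word_rho_word_range[of R n] perm_word_inj[of "map r R" i "i+1"]
      by auto
    have "eqv n (map r (a # R) @ [r i, s' i] @ map r (rev (a # R)))
        (conj_rho a (map r R @ [r i, s' i] @ map r (rev R)))"
      using Cons.prems assms by (intro eqv_reflI) (auto simp: conj_rho_def)
    also have "eqv n \<dots> (conj_rho a (lam_word ?k ?l))"
      using Cons by (intro eqv_conj_rho_cong) auto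
    also have "eqv n \<dots> (lam_word (adj_swap a ?k) (adj_swap a ?l))"
      using Cons.prems kl by (intro eqv_conj_rho_lam_word) auto
    finally show ?case by simp
  qed
  moreover have "eqv n (map r R @ [r i, s' i] @ inv_word (map r R))
      (map r R @ [r i, s' i] @ map r (rev R))"
    using assms by (intro eqv_append_left eqv_inv_word_rho_word) auto
  ultimately show ?thesis by (rule eqv.trans[rotated])
qed

section \<open>\<open>PT\<^sub>n \<subseteq> PL\<^sub>n\<close>\<close>

lemma subgroup_TVP: "subgroup (TVP n) (TVB n)"
proof (rule TVB.subgroupI)
  show "TVP n \<subseteq> carrier (TVB n)" by (auto simp: TVP_def)
  show "TVP n \<noteq> {}" using cls_in_TVP_iff[of n "[]"] by auto
next
  fix x assume "x \<in> TVP n"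
  then obtain w where "valid_word n w" "x = cls n w" "perm_word w = id" by (rule TVP_memE)
  then show "inv\<^bsub>TVB n\<^esub> x \<in> TVP n"
    by (simp add: inv_cls cls_in_TVP_iff perm_word_inv_word_id)
next
  fix x y assume "x \<in> TVP n" "y \<in> TVP n"
  then show "x \<otimes>\<^bsub>TVB n\<^esub> y \<in> TVP n"
    by (auto simp: mult_cls cls_in_TVP_iff elim!: TVP_memE)
qed

lemma subgroup_A: "subgroup (A n) (TVB n)"
  unfolding A_def by (rule TVB.generate_is_subgroup) (auto simp: gam_def)

lemma PT_memE:
  assumes "x \<in> PT n"
  obtains w where "valid_word n w" "x = cls n (w @ inv_word (phiPT_word w))"
proof -
  obtain w where "w \<in> x" "x \<in> carrier (TVB n)" and triv: "eqv n (phiPT_word w) []"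
    using assms by (auto simp: PT_def)
  then have w: "valid_word n w" "x = cls n w" by (auto dest: carrier_TVB_memD)
  have "eqv n (w @ inv_word (phiPT_word w)) (w @ [])"
    using eqv_append_left[OF eqv_inv_word[OF triv]] w by simp
  then show ?thesis using that w by (simp add: cls_eqI)
qed

context
  fixes n :: nat and h :: "word set \<Rightarrow> word set"
  assumes h_hom: "h \<in> hom ((TVB n)\<lparr>carrier := TVP n\<rparr>) ((TVB n)\<lparr>carrier := A n\<rparr>)"
    and h_lam: "\<forall>k l. 1 \<le> k \<and> k \<le> n \<and> 1 \<le> l \<and> l \<le> n \<and> k \<noteq> l \<longrightarrow> h (lam n k l) = \<one>\<^bsub>TVB n\<^esub>"
begin

lemma h_cls_in_carrier: "valid_word n w \<Longrightarrow> perm_word w = id \<Longrightarrow> h (cls n w) \<in> carrier (TVB n)"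
  using hom_in_carrier[OF h_hom, of "cls n w"] subgroup.subset[OF subgroup_A]
  by (auto simp: cls_in_TVP_iff)

lemma h_cls_append:
  "valid_word n u \<Longrightarrow> valid_word n v \<Longrightarrow> perm_word u = id \<Longrightarrow> perm_word v = id \<Longrightarrow>
    h (cls n (u @ v)) = h (cls n u) \<otimes>\<^bsub>TVB n\<^esub> h (cls n v)"
  using hom_mult[OF h_hom, of "cls n u" "cls n v"] by (simp add: cls_in_TVP_iff mult_cls)

lemma h_cls_Nil: "h (cls n []) = \<one>\<^bsub>TVB n\<^esub>"
  using hom_one[OF h_hom subgroup.subgroup_is_group[OF subgroup_TVP group_TVB]
      subgroup.subgroup_is_group[OF subgroup_A group_TVB]]
  by (simp add: one_TVB)

lemma h_cls_eqv_Nil: "eqv n w [] \<Longrightarrow> h (cls n w) = \<one>\<^bsub>TVB n\<^esub>"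
  using h_cls_Nil cls_eq_iff eqv_valid_word by metis

lemma h_cls_inv_word:
  assumes "valid_word n w" "perm_word w = id" "h (cls n w) = \<one>\<^bsub>TVB n\<^esub>"
  shows "h (cls n (inv_word w)) = \<one>\<^bsub>TVB n\<^esub>"
proof -
  have "h (cls n (inv_word w)) = h (cls n w) \<otimes>\<^bsub>TVB n\<^esub> h (cls n (inv_word w))"
    using assms h_cls_in_carrier[of "inv_word w"] TVB.l_one
    by (simp add: perm_word_inv_word_id)
  also have "\<dots> = \<one>\<^bsub>TVB n\<^esub>"
    using assms h_cls_eqv_Nil[OF eqv_append_inv_word] h_cls_append[of w "inv_word w"]
    by (simp add: perm_word_inv_word_id)
  finally show ?thesis .
qed

lemma h_cls_conj:
  assumes "valid_word n p" "perm_word p = id" "valid_word n u" "perm_word u = id"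
    and "h (cls n u) = \<one>\<^bsub>TVB n\<^esub>"
  shows "h (cls n (p @ u @ inv_word p)) = \<one>\<^bsub>TVB n\<^esub>"
proof -
  have p': "valid_word n (inv_word p)" "perm_word (inv_word p) = id"
    using assms by (simp_all add: perm_word_inv_word_id)
  have "h (cls n (p @ u @ inv_word p)) = h (cls n p) \<otimes>\<^bsub>TVB n\<^esub> h (cls n (inv_word p))"
    using assms p' h_cls_append[of p "u @ inv_word p"] h_cls_append[of u "inv_word p"]
      h_cls_in_carrier TVB.l_one
    by (simp add: fun_eq_iff)
  also have "\<dots> = \<one>\<^bsub>TVB n\<^esub>"
    using assms p' h_cls_append[of p "inv_word p"] h_cls_eqv_Nil[OF eqv_append_inv_word]
    by simp
  finally show ?thesis .
qed

lemma h_rho_conj_lam: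
  assumes "set R \<subseteq> {1..<n}" "1 \<le> i" "i < n"
  shows "h (cls n (map r R @ [r i, s' i] @ inv_word (map r R))) = \<one>\<^bsub>TVB n\<^esub>"
proof -
  let ?k = "perm_word (map r R) i" and ?l = "perm_word (map r R) (i+1)"
  have kl: "?k \<in> {1..n}" "?l \<in> {1..n}" "?k \<noteq> ?l"
    using assms perm_word_rho_word_range[of R n] perm_word_inj[of "map r R" i "i+1"] by auto
  have "cls n (map r R @ [r i, s' i] @ inv_word (map r R)) = lam n ?k ?l"
    unfolding lam_def using assms eqv_rho_word_conj_lam[OF assms] by (simp add: cls_eq_iff)
  then show ?thesis using h_lam kl by auto
qed

text \<open>Write the conjugator as a \<open>\<gamma>\<close>-word times a \<open>\<rho>\<close>-word: conjugation by the
  \<open>\<rho>\<close>-word turns \<open>\<lambda>\<^sub>i\<^sub>,\<^sub>i\<^sub>+\<^sub>1\<^sup>\<plusminus>\<^sup>1\<close> into some \<open>\<lambda>\<^sub>k\<^sub>l\<^sup>\<plusminus>\<^sup>1\<close>, and conjugation by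
  the \<open>\<gamma>\<close>-word stays inside \<open>TVP\<^sub>n\<close>.\<close>
lemma h_sigma_free_conj:
  assumes "sigma_free p" "valid_word n p" "1 \<le> i" "i < n"
  shows "h (cls n (p @ [(Sg i, e), (Rg i, \<not> e)] @ inv_word p)) = \<one>\<^bsub>TVB n\<^esub>"
proof -
  let ?L = "[(Sg i, e), (Rg i, \<not> e)]"
  obtain js R where js: "set js \<subseteq> {1..n}" and R: "set R \<subseteq> {1..<n}"
    and p: "eqv n p (map g js @ map r R)"
    using sigma_free_eqv_gamma_rho[OF assms(1,2)] .
  let ?G = "map g js" and ?R = "map r R"
  have mid: "h (cls n (?R @ ?L @ inv_word ?R)) = \<one>\<^bsub>TVB n\<^esub>"
  proof (cases e)
    case False
    have "?R @ ?L @ inv_word ?R = inv_word (?R @ [r i, s' i] @ inv_word ?R)"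
      using False by simp
    then show ?thesis
      using h_cls_inv_word[of "?R @ [r i, s' i] @ inv_word ?R"] h_rho_conj_lam[OF R assms(3,4)]
        R assms by (simp add: fun_eq_iff)
  next
    case True
    have "eqv n (?R @ ?L @ inv_word ?R) (?R @ [r i, r i] @ [s' i, r i] @ inv_word ?R)"
      using True R assms by (intro eqv_rewrite_sym[OF eqv_rho_rho]) auto
    also have "eqv n \<dots> ((map r (R @ [i]) @ [r i, s' i]) @ [(Rg i, True)] @ inv_word ?R)"
      using R assms by (intro eqv_rewrite_sym[OF eqv_rho_inv]) auto
    finally have "eqv n (?R @ ?L @ inv_word ?R)
        (map r (R @ [i]) @ [r i, s' i] @ inv_word (map r (R @ [i])))"
      by simp
    then have "cls n (?R @ ?L @ inv_word ?R)
        = cls n (map r (R @ [i]) @ [r i, s' i] @ inv_word (map r (R @ [i])))"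
      using R assms by (simp add: cls_eq_iff)
    then show ?thesis using h_rho_conj_lam[of "R @ [i]" i] R assms by simp
  qed
  have "eqv n (p @ ?L @ inv_word p) (?G @ (?R @ ?L @ inv_word ?R) @ inv_word ?G)"
    using eqv_append[OF p eqv_append_left[OF eqv_inv_word[OF p], of ?L]] assms by simp
  then have "h (cls n (p @ ?L @ inv_word p))
      = h (cls n (?G @ (?R @ ?L @ inv_word ?R) @ inv_word ?G))"
    by (simp add: cls_eqI)
  also have "\<dots> = \<one>\<^bsub>TVB n\<^esub>"
  proof (rule h_cls_conj)
    show "perm_word (?R @ ?L @ inv_word ?R) = id"
      by (rule perm_word_conj_id) (auto simp: fun_eq_iff)
  qed (use mid js R assms in auto)
  finally show ?thesis .
qed

lemma h_cls_phiPT_quotient: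
  "valid_word n w \<Longrightarrow> h (cls n (w @ inv_word (phiPT_word w))) = \<one>\<^bsub>TVB n\<^esub>"
proof (induction w rule: rev_induct)
  case Nil
  then show ?case by (simp add: h_cls_Nil)
next
  case (snoc a w)
  let ?P = "phiPT_word w" and ?a' = "(subst_gen (fst a), snd a)"
  let ?X = "w @ inv_word ?P" and ?Y = "?P @ [a] @ inv_word [?a'] @ inv_word ?P"
  have valid: "valid_word n w" "valid_gen n (fst a)" using snoc.prems by auto
  have "eqv n (w @ (a # inv_word [?a'] @ inv_word ?P))
      (w @ (inv_word ?P @ ?P) @ (a # inv_word [?a'] @ inv_word ?P))"
    using valid by (intro eqv_rewrite_sym[OF eqv_inv_word_append]) auto
  then have "cls n ((w @ [a]) @ inv_word (phiPT_word (w @ [a]))) = cls n (?X @ ?Y)"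
    by (simp add: cls_eqI)
  moreover have perm: "perm_word ?X = id" "perm_word ?Y = id"
    by (auto simp: fun_eq_iff)
  moreover have "h (cls n ?Y) = \<one>\<^bsub>TVB n\<^esub>"
  proof (cases "\<exists>i. fst a = Sg i")
    case True
    then obtain i e where a: "a = (Sg i, e)" by (metis prod.collapse)
    then show ?thesis using h_sigma_free_conj[of ?P i e] valid by auto
  next
    case False
    then have "inv_word [?a'] = [(fst a, \<not> snd a)]" by (cases "fst a") auto
    then have "eqv n ?Y (?P @ [] @ inv_word ?P)"
      using valid eqv.cancel[of n "fst a" "snd a"]
      by (intro eqv_rewrite) auto
    also have "eqv n \<dots> []" using eqv_append_inv_word[of n ?P] valid by simp
    finally show ?thesis by (rule h_cls_eqv_Nil)
  qed
  ultimately show ?case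
    using snoc.IH valid h_cls_append[of ?X ?Y] TVB.l_one by simp
qed

end

lemma PT_subset_PL: "PT n \<subseteq> PL n"
proof
  fix x assume "x \<in> PT n"
  then obtain w where w: "valid_word n w" "x = cls n (w @ inv_word (phiPT_word w))"
    by (rule PT_memE)
  then have "x \<in> TVP n" by (simp add: cls_in_TVP_iff fun_eq_iff)
  then show "x \<in> PL n" using h_cls_phiPT_quotient w unfolding PL_def by auto
qed

theorem mainTheorem16:
  fixes n :: nat
  assumes "n \<ge> 2"
  shows "(TVB n)\<lparr>carrier := PT n\<rparr> \<cong> (TVB n)\<lparr>carrier := PL n\<rparr>"
proof -
  have "PT n = PL n" using PT_subset_PL PL_subset_PT by blast
  then show ?thesis by simp
qed

end
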